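(* Let $(\mathbf{x}_i,y_i)$, $i=1,\dots,n$, be training samples with $\mathbf{x}_i\in\mathbb{R}^d$ and $y_i\in\{1,2\}$, let $\mathbf{x}^*_{i'}\in\mathbb{R}^d$, $i'=1,\dots,m$, be universum samples, and let $C,C^*>0$, $\Delta\ge 0$. Consider the two-class MU-SVM problem $$\min_{\mathbf{w}_1,\mathbf{w}_2,\boldsymbol\xi,\boldsymbol\zeta}\ \tfrac12(\|\mathbf{w}_1\|_2^2+\|\mathbf{w}_2\|_2^2)+C\sum_{i=1}^n\xi_i+C^*\sum_{i'=1}^m(\zeta_{i'1}+\zeta_{i'2})$$ subject to $(\mathbf{w}_{y_i}-\mathbf{w}_l)^\top\mathbf{x}_i\ge e_{il}-\xi_i$ with $e_{il}=1-\delta_{il}$ for $i=1,\dots,n$, $l=1,2$ (where $\delta_{il}=1$ if $y_i=l$ and $0$ otherwise), and $\big|\mathbf{w}_k^\top\mathbf{x}^*_{i'}-\max_{l=1,2}\mathbf{w}_l^\top\mathbf{x}^*_{i'}\big|\le\Delta+\zeta_{i'k}$, $\zeta_{i'k}\ge 0$ for $i'=1,\dots,m$, $k=1,2$. Then this problem reduces to the binary Universum-SVM (U-SVM) problem with zero bias: any optimal solution satisfies $\mathbf{w}_1=-\mathbf{w}_2$, and, relabeling class 1 as $+1$ and class 2 as $-1$ (labels $\tilde y_i\in\{+1,-1\}$), the vector $\mathbf{w}=\mathbf{w}_1-\mathbf{w}_2$ is an optimal solution of the U-SVM-type problem $$\min_{\mathbf{w},\boldsymbol\xi,\boldsymbol\zeta}\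 \tfrac14\|\mathbf{w}\|_2^2+C\sum_{i=1}^n\xi_i+C^*\sum_{i'=1}^m\zeta_{i'}\quad\text{s.t.}\quad \tilde y_i\,\mathbf{w}^\top\mathbf{x}_i\ge 1-\xi_i,\ \xi_i\ge0;\quad |\mathbf{w}^\top\mathbf{x}^*_{i'}|\le\Delta+\zeta_{i'},\ \zeta_{i'}\ge0,$$ i.e. the binary U-SVM with bias term $b=0$.
   Context: The Universum-SVM (U-SVM) of Weston et al. (2006) for binary labels $\tilde y_i\in\{\pm1\}$ minimizes a weighted sum of $\|\mathbf{w}\|^2$, hinge losses $\xi_i$ on the training constraints $\tilde y_i(\mathbf{w}^\top\mathbf{x}_i+b)\ge 1-\xi_i$, and $\epsilon$-insensitive losses $\zeta_{i'}$ on universum constraints $|\mathbf{w}^\top\mathbf{x}^*_{i'}+b|\le\Delta+\zeta_{i'}$; here $b=0$. *)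

theory Defs
  imports "HOL-Analysis.Analysis"
begin

text \<open>Samples are indexed 0-based: training samples x i, y i for i < n,
  universum samples xs j for j < m.  Class labels are 1 and 2.
  The MU-SVM weight vectors are W 1 and W 2 (W :: nat => vector, only W 1, W 2 matter);
  the universum slacks are zeta j k for j < m, k in {1,2}.\<close>

definition musvm_feasible ::
  "real \<Rightarrow> (nat \<Rightarrow> real^'d) \<Rightarrow> (nat \<Rightarrow> nat) \<Rightarrow> nat \<Rightarrow> (nat \<Rightarrow> real^'d) \<Rightarrow> nat
   \<Rightarrow> (nat \<Rightarrow> real^'d) \<Rightarrow> (nat \<Rightarrow> real) \<Rightarrow> (nat \<Rightarrow> nat \<Rightarrow> real) \<Rightarrow> bool" where
  "musvm_feasible \<Delta> x y n xs m W \<xi> \<zeta> \<longleftrightarrow>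
     (\<forall>i<n. \<forall>l\<in>{1,2}.
        (W (y i) - W l) \<bullet> x i \<ge> (1 - (if y i = l then 1 else 0)) - \<xi> i) \<and>
     (\<forall>j<m. \<forall>k\<in>{1,2}.
        \<bar>W k \<bullet> xs j - max (W 1 \<bullet> xs j) (W 2 \<bullet> xs j)\<bar> \<le> \<Delta> + \<zeta> j k \<and> \<zeta> j k \<ge> 0)"

definition musvm_obj ::
  "real \<Rightarrow> real \<Rightarrow> nat \<Rightarrow> nat \<Rightarrow> (nat \<Rightarrow> real^'d) \<Rightarrow> (nat \<Rightarrow> real) \<Rightarrow> (nat \<Rightarrow> nat \<Rightarrow> real) \<Rightarrow> real" where
  "musvm_obj C Cs n m W \<xi> \<zeta> =
     1/2 * ((norm (W 1))\<^sup>2 + (norm (W 2))\<^sup>2) + C * (\<Sum>i<n. \<xi> i)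
     + Cs * (\<Sum>j<m. \<zeta> j 1 + \<zeta> j 2)"

definition musvm_optimal ::
  "real \<Rightarrow> real \<Rightarrow> real \<Rightarrow> (nat \<Rightarrow> real^'d) \<Rightarrow> (nat \<Rightarrow> nat) \<Rightarrow> nat \<Rightarrow> (nat \<Rightarrow> real^'d) \<Rightarrow> nat
   \<Rightarrow> (nat \<Rightarrow> real^'d) \<Rightarrow> (nat \<Rightarrow> real) \<Rightarrow> (nat \<Rightarrow> nat \<Rightarrow> real) \<Rightarrow> bool" where
  "musvm_optimal C Cs \<Delta> x y n xs m W \<xi> \<zeta> \<longleftrightarrow>
     musvm_feasible \<Delta> x y n xs m W \<xi> \<zeta> \<and>
     (\<forall>W' \<xi>' \<zeta>'. musvm_feasible \<Delta> x y n xs m W' \<xi>' \<zeta>' \<longrightarrow>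
        musvm_obj C Cs n m W \<xi> \<zeta> \<le> musvm_obj C Cs n m W' \<xi>' \<zeta>')"

definition usvm_feasible ::
  "real \<Rightarrow> (nat \<Rightarrow> real^'d) \<Rightarrow> (nat \<Rightarrow> real) \<Rightarrow> nat \<Rightarrow> (nat \<Rightarrow> real^'d) \<Rightarrow> nat
   \<Rightarrow> real^'d \<Rightarrow> (nat \<Rightarrow> real) \<Rightarrow> (nat \<Rightarrow> real) \<Rightarrow> bool" where
  "usvm_feasible \<Delta> x yt n xs m w \<xi> \<zeta> \<longleftrightarrow>
     (\<forall>i<n. yt i * (w \<bullet> x i) \<ge> 1 - \<xi> i \<and> \<xi> i \<ge> 0) \<and>
     (\<forall>j<m. \<bar>w \<bullet> xs j\<bar> \<le> \<Delta> + \<zeta> j \<and> \<zeta> j \<ge> 0)"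

definition usvm_obj ::
  "real \<Rightarrow> real \<Rightarrow> nat \<Rightarrow> nat \<Rightarrow> real^'d \<Rightarrow> (nat \<Rightarrow> real) \<Rightarrow> (nat \<Rightarrow> real) \<Rightarrow> real" where
  "usvm_obj C Cs n m w \<xi> \<zeta> =
     1/4 * (norm w)\<^sup>2 + C * (\<Sum>i<n. \<xi> i) + Cs * (\<Sum>j<m. \<zeta> j)"

definition usvm_optimal ::
  "real \<Rightarrow> real \<Rightarrow> real \<Rightarrow> (nat \<Rightarrow> real^'d) \<Rightarrow> (nat \<Rightarrow> real) \<Rightarrow> nat \<Rightarrow> (nat \<Rightarrow> real^'d) \<Rightarrow> nat
   \<Rightarrow> real^'d \<Rightarrow> (nat \<Rightarrow> real) \<Rightarrow> (nat \<Rightarrow> real) \<Rightarrow> bool" where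
  "usvm_optimal C Cs \<Delta> x yt n xs m w \<xi> \<zeta> \<longleftrightarrow>
     usvm_feasible \<Delta> x yt n xs m w \<xi> \<zeta> \<and>
     (\<forall>w' \<xi>' \<zeta>'. usvm_feasible \<Delta> x yt n xs m w' \<xi>' \<zeta>' \<longrightarrow>
        usvm_obj C Cs n m w \<xi> \<zeta> \<le> usvm_obj C Cs n m w' \<xi>' \<zeta>')"

end

theory Submission
  imports Defs
begin

(* By the parallelogram law the MU-SVM objective equals the U-SVM objective of
  w = W 1 - W 2 (with universum slacks \<zeta> j 1 + \<zeta> j 2) plus the penalty
  norm (W 1 + W 2)^2 / 4, and the constraints only involve w.  Conversely every U-SVM
  solution w lifts to the antisymmetric pair (w/2, -w/2) at the same cost, by putting its
  universum slack on the class the sign of w \<bullet> x* penalises.  Hence an optimal MU-SVM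
  solution has zero penalty, i.e. W 1 = -W 2, and its difference is U-SVM optimal. *)

definition antisym_weights :: "real^'d \<Rightarrow> nat \<Rightarrow> real^'d" where
  "antisym_weights w k = (if k = 1 then (1/2) *\<^sub>R w else - ((1/2) *\<^sub>R w))"

definition binary_labels :: "(nat \<Rightarrow> nat) \<Rightarrow> nat \<Rightarrow> real" where
  "binary_labels y i = (if y i = 1 then 1 else -1)"

lemma sum_norm_squares_eq:
  fixes a b :: "'a::real_inner"
  shows "(norm a)\<^sup>2 + (norm b)\<^sup>2 = (norm (a - b))\<^sup>2 / 2 + (norm (a + b))\<^sup>2 / 2"
  by (simp add: power2_norm_eq_inner inner_add_left inner_add_right inner_diff_left
      inner_diff_right inner_commute[of b a] field_simps)

lemma musvm_obj_eq_usvm_obj_plus_penalty: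
  "musvm_obj C Cs n m W \<xi> \<zeta> =
     usvm_obj C Cs n m (W 1 - W 2) \<xi> (\<lambda>j. \<zeta> j 1 + \<zeta> j 2) + (norm (W 1 + W 2))\<^sup>2 / 4"
  using sum_norm_squares_eq[of "W 1" "W 2"]
  by (simp add: musvm_obj_def usvm_obj_def sum.distrib)

lemma musvm_feasible_imp_usvm_feasible:
  assumes labels: "\<forall>i<n. y i \<in> {1, 2}"
    and feas: "musvm_feasible \<Delta> x y n xs m W \<xi> \<zeta>"
  shows "usvm_feasible \<Delta> x (binary_labels y) n xs m (W 1 - W 2) \<xi> (\<lambda>j. \<zeta> j 1 + \<zeta> j 2)"
  unfolding usvm_feasible_def
proof (intro conjI allI impI)
  fix i assume "i < n"
  with feas have "\<forall>l\<in>{1,2}. (W (y i) - W l) \<bullet> x i \<ge> (1 - (if y i = l then 1 else 0)) - \<xi> i"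
    unfolding musvm_feasible_def by blast
  moreover from labels \<open>i < n\<close> have "y i \<in> {1, 2}" by blast
  ultimately show "binary_labels y i * ((W 1 - W 2) \<bullet> x i) \<ge> 1 - \<xi> i" and "\<xi> i \<ge> 0"
    by (auto simp: binary_labels_def inner_diff_left)
next
  fix j assume "j < m"
  with feas have "\<forall>k\<in>{1,2}. \<bar>W k \<bullet> xs j - max (W 1 \<bullet> xs j) (W 2 \<bullet> xs j)\<bar> \<le> \<Delta> + \<zeta> j k
                    \<and> \<zeta> j k \<ge> 0"
    unfolding musvm_feasible_def by blast
  then show "\<bar>(W 1 - W 2) \<bullet> xs j\<bar> \<le> \<Delta> + (\<zeta> j 1 + \<zeta> j 2)" and "\<zeta> j 1 + \<zeta> j 2 \<ge> 0"
    by (auto simp: inner_diff_left max_def abs_if split: if_splits)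
qed

lemma usvm_feasible_lifts_to_musvm:
  assumes labels: "\<forall>i<n. y i \<in> {1, 2}" and "\<Delta> \<ge> 0"
    and feas: "usvm_feasible \<Delta> x (binary_labels y) n xs m w \<xi> \<zeta>"
  obtains \<zeta>m where "musvm_feasible \<Delta> x y n xs m (antisym_weights w) \<xi> \<zeta>m"
    and "musvm_obj C Cs n m (antisym_weights w) \<xi> \<zeta>m = usvm_obj C Cs n m w \<xi> \<zeta>"
proof
  define \<zeta>m where "\<zeta>m j k = (if (k = 1) = (w \<bullet> xs j < 0) then \<zeta> j else 0)" for j k :: nat
  show "musvm_feasible \<Delta> x y n xs m (antisym_weights w) \<xi> \<zeta>m"
    unfolding musvm_feasible_def
  proof (intro conjI allI impI ballI)
    fix i l assume "i < n" and "l \<in> {1::nat, 2}"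
    moreover from labels \<open>i < n\<close> have "y i \<in> {1, 2}" by blast
    moreover from feas \<open>i < n\<close> have "binary_labels y i * (w \<bullet> x i) \<ge> 1 - \<xi> i" "\<xi> i \<ge> 0"
      unfolding usvm_feasible_def by auto
    ultimately show "(antisym_weights w (y i) - antisym_weights w l) \<bullet> x i
                       \<ge> (1 - (if y i = l then 1 else 0)) - \<xi> i"
      by (auto simp: antisym_weights_def binary_labels_def inner_diff_left)
  next
    fix j k assume "j < m" and "k \<in> {1::nat, 2}"
    moreover from feas \<open>j < m\<close> have "\<bar>w \<bullet> xs j\<bar> \<le> \<Delta> + \<zeta> j" "\<zeta> j \<ge> 0"
      unfolding usvm_feasible_def by auto
    ultimately show "\<bar>antisym_weights w k \<bullet> xs j
                       - max (antisym_weights w 1 \<bullet> xs j) (antisym_weights w 2 \<bullet> xs j)\<bar>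
                       \<le> \<Delta> + \<zeta>m j k"
      and "\<zeta>m j k \<ge> 0"
      using \<open>\<Delta> \<ge> 0\<close> by (auto simp: antisym_weights_def \<zeta>m_def max_def)
  qed
  have "(\<Sum>j<m. \<zeta>m j 1 + \<zeta>m j 2) = (\<Sum>j<m. \<zeta> j)"
    by (rule sum.cong) (simp_all add: \<zeta>m_def)
  then show "musvm_obj C Cs n m (antisym_weights w) \<xi> \<zeta>m = usvm_obj C Cs n m w \<xi> \<zeta>"
    by (simp add: musvm_obj_eq_usvm_obj_plus_penalty usvm_obj_def antisym_weights_def
        scaleR_2[symmetric])
qed

theorem proposition1:
  fixes x xs :: "nat \<Rightarrow> real^'d" and y :: "nat \<Rightarrow> nat" and n m :: nat
    and C Cs \<Delta> :: real
    and W :: "nat \<Rightarrow> real^'d" and \<xi> :: "nat \<Rightarrow> real" and \<zeta> :: "nat \<Rightarrow> nat \<Rightarrow> real"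
  assumes "C > 0" and "Cs > 0" and "\<Delta> \<ge> 0"
    and "\<forall>i<n. y i \<in> {1, 2}"
    and "musvm_optimal C Cs \<Delta> x y n xs m W \<xi> \<zeta>"
  shows "W 1 = - W 2 \<and>
    (\<exists>\<xi>' \<zeta>'. usvm_optimal C Cs \<Delta> x (\<lambda>i. if y i = 1 then 1 else -1) n xs m
                (W 1 - W 2) \<xi>' \<zeta>')"
proof -
  define w where "w = W 1 - W 2"
  define \<zeta>u where "\<zeta>u j = \<zeta> j 1 + \<zeta> j 2" for j
  have feas: "usvm_feasible \<Delta> x (binary_labels y) n xs m w \<xi> \<zeta>u"
    using musvm_feasible_imp_usvm_feasible assms(4,5)
    unfolding musvm_optimal_def w_def \<zeta>u_def by blast
  have below_usvm: "musvm_obj C Cs n m W \<xi> \<zeta> \<le> usvm_obj C Cs n m w' \<xi>' \<zeta>'"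
    if "usvm_feasible \<Delta> x (binary_labels y) n xs m w' \<xi>' \<zeta>'" for w' \<xi>' \<zeta>'
    using usvm_feasible_lifts_to_musvm[OF assms(4,3) that] assms(5)
    unfolding musvm_optimal_def by metis
  have obj: "musvm_obj C Cs n m W \<xi> \<zeta> = usvm_obj C Cs n m w \<xi> \<zeta>u + (norm (W 1 + W 2))\<^sup>2 / 4"
    unfolding musvm_obj_eq_usvm_obj_plus_penalty w_def \<zeta>u_def ..
  with below_usvm[OF feas] have antisym: "W 1 + W 2 = 0"
    by simp
  then have obj_eq: "musvm_obj C Cs n m W \<xi> \<zeta> = usvm_obj C Cs n m w \<xi> \<zeta>u"
    using obj by simp
  have "usvm_optimal C Cs \<Delta> x (binary_labels y) n xs m w \<xi> \<zeta>u"
    unfolding usvm_optimal_def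
  proof (intro conjI allI impI feas)
    fix w' \<xi>' \<zeta>' assume "usvm_feasible \<Delta> x (binary_labels y) n xs m w' \<xi>' \<zeta>'"
    from below_usvm[OF this] show "usvm_obj C Cs n m w \<xi> \<zeta>u \<le> usvm_obj C Cs n m w' \<xi>' \<zeta>'"
      unfolding obj_eq .
  qed
  with antisym show ?thesis
    unfolding w_def binary_labels_def by (auto simp: eq_neg_iff_add_eq_0)
qed

end
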